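(* Let $L:\mathbb{R}^d\to\mathbb{R}^{\mathcal{Y}}_+$ be a minimizable loss. If $L$ has a finite representative set $\mathcal{S}\subseteq\mathbb{R}^d$, then $L$ embeds the discrete loss $L|_{\mathcal{S}}$ (the restriction of $L$ to $\mathcal{S}$).
   Context: $\mathcal{Y}$ is a finite label set, $\Delta_{\mathcal{Y}}$ the simplex, $\mathbb{R}^{\mathcal{Y}}_+$ the nonnegative orthant. A loss $L:\mathcal{R}\to\mathbb{R}^{\mathcal{Y}}_+$ is minimizable if $\inf_r\langle p,L(r)\rangle$ is attained for every $p\in\Delta_{\mathcal{Y}}$; then $\mathrm{prop}[L](p)=\arg\min_r\langle p,L(r)\rangle$. $\mathcal{S}$ is representative for $L$ if $\mathrm{prop}[L](p)\cap\mathcal{S}\ne\emptyset$ for all $p$. A loss is discrete if its report set is finite. A minimizable $L:\mathbb{R}^d\to\mathbb{R}^{\mathcal{Y}}_+$ embeds $\ell:\mathcal{R}\to\mathbb{R}^{\mathcal{Y}}_+$ if there exist a representative set $\mathcal{S}'$ for $\ell$ and an injective $\varphi:\mathcal{S}'\to\mathbb{R}^d$ with (i) $L(\varphi(r))=\ell(r)$ for $r\in\mathcal{S}'$ and (ii) $r\in\mathrm{prop}[\ell](p)\iff\varphi(r)\in\mathrm{prop}[L](p)$ for all $p$, $r\in\mathcal{S}'$. *)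

theory Defs
  imports "HOL-Analysis.Analysis"
begin

text \<open>A loss with report type 'r is a function
  'r \<Rightarrow> ('y \<Rightarrow> real); its report set is given explicitly as R.\<close>

definition prob_simplex :: "('y::finite \<Rightarrow> real) set" where
  "prob_simplex = {p. (\<forall>y. 0 \<le> p y) \<and> (\<Sum>y\<in>UNIV. p y) = 1}"

definition exp_loss :: "('r \<Rightarrow> 'y::finite \<Rightarrow> real) \<Rightarrow> ('y \<Rightarrow> real) \<Rightarrow> 'r \<Rightarrow> real" where
  "exp_loss L p r = (\<Sum>y\<in>UNIV. p y * L r y)"

definition nonneg_loss :: "('r \<Rightarrow> 'y \<Rightarrow> real) \<Rightarrow> 'r set \<Rightarrow> bool" where
  "nonneg_loss L R \<longleftrightarrow> (\<forall>r\<in>R. \<forall>y. 0 \<le> L r y)"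

definition minimizable :: "('r \<Rightarrow> 'y::finite \<Rightarrow> real) \<Rightarrow> 'r set \<Rightarrow> bool" where
  "minimizable L R \<longleftrightarrow>
     (\<forall>p\<in>prob_simplex. \<exists>r\<in>R. exp_loss L p r = (INF r'\<in>R. exp_loss L p r'))"

definition prop_loss :: "('r \<Rightarrow> 'y::finite \<Rightarrow> real) \<Rightarrow> 'r set \<Rightarrow> ('y \<Rightarrow> real) \<Rightarrow> 'r set" where
  "prop_loss L R p = {r\<in>R. \<forall>r'\<in>R. exp_loss L p r \<le> exp_loss L p r'}"

definition representative :: "('r \<Rightarrow> 'y::finite \<Rightarrow> real) \<Rightarrow> 'r set \<Rightarrow> 'r set \<Rightarrow> bool" where
  "representative L R S \<longleftrightarrow> S \<subseteq> R \<and> (\<forall>p\<in>prob_simplex. prop_loss L R p \<inter> S \<noteq> {})"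

definition discrete_loss :: "('r \<Rightarrow> 'y \<Rightarrow> real) \<Rightarrow> 'r set \<Rightarrow> bool" where
  "discrete_loss L R \<longleftrightarrow> finite R"

definition embeds ::
  "(real^'d \<Rightarrow> 'y::finite \<Rightarrow> real) \<Rightarrow> ('r \<Rightarrow> 'y \<Rightarrow> real) \<Rightarrow> 'r set \<Rightarrow> bool" where
  "embeds L ell R \<longleftrightarrow> minimizable L UNIV \<and>
     (\<exists>S'. representative ell R S' \<and>
        (\<exists>\<phi> :: 'r \<Rightarrow> real^'d. inj_on \<phi> S' \<and>
           (\<forall>r\<in>S'. L (\<phi> r) = ell r) \<and>
           (\<forall>p\<in>prob_simplex. \<forall>r\<in>S'. r \<in> prop_loss ell R p \<longleftrightarrow> \<phi> r \<in> prop_loss L UNIV p)))"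

end

theory Submission
  imports Defs
begin

text \<open>If S contains a global minimizer of the expected loss for every p, then the
  minimum over S equals the global minimum. Hence a report in S is optimal among S
  exactly when it is optimal among all reports, so S is representative for the
  restricted loss and the identity on S is an embedding.\<close>

lemma prop_loss_subset_iff:
  assumes "S \<subseteq> R" and "prop_loss L R p \<inter> S \<noteq> {}" and "r \<in> S"
  shows "r \<in> prop_loss L S p \<longleftrightarrow> r \<in> prop_loss L R p"
proof
  obtain r0 where "r0 \<in> S" and r0_opt: "\<forall>r'\<in>R. exp_loss L p r0 \<le> exp_loss L p r'"
    using assms(2) unfolding prop_loss_def by blast
  assume "r \<in> prop_loss L S p"
  then have "exp_loss L p r \<le> exp_loss L p r0"
    using \<open>r0 \<in> S\<close> unfolding prop_loss_def by blast
  with r0_opt show "r \<in> prop_loss L R p"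
    using assms unfolding prop_loss_def by (auto intro: order_trans)
next
  assume "r \<in> prop_loss L R p"
  then show "r \<in> prop_loss L S p"
    using assms(1,3) unfolding prop_loss_def by blast
qed

lemma representative_restrict:
  fixes L :: "'r \<Rightarrow> 'y::finite \<Rightarrow> real"
  assumes "representative L R S"
  shows "representative L S S"
  unfolding representative_def
proof (intro conjI ballI)
  fix p :: "'y \<Rightarrow> real" assume "p \<in> prob_simplex"
  then obtain r where "r \<in> S" "r \<in> prop_loss L R p"
    using assms unfolding representative_def by blast
  moreover have "S \<subseteq> R"
    using assms unfolding representative_def by blast
  ultimately show "prop_loss L S p \<inter> S \<noteq> {}"
    using prop_loss_subset_iff[of S R L p r] by blast
qed simp

lemma embeds_restrict_representative:
  fixes L :: "real^'d \<Rightarrow> 'y::finite \<Rightarrow> real"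
  assumes "minimizable L UNIV" and "representative L UNIV S"
  shows "embeds L L S"
proof -
  have "\<forall>p\<in>prob_simplex. \<forall>r\<in>S. r \<in> prop_loss L S p \<longleftrightarrow> r \<in> prop_loss L UNIV p"
    using assms(2) prop_loss_subset_iff[of S UNIV L] unfolding representative_def by blast
  then show ?thesis
    unfolding embeds_def
    using assms(1) representative_restrict[OF assms(2)]
    by (intro conjI exI[of _ S] exI[of _ id]) simp_all
qed

theorem proposition1:
  fixes L :: "real^'d \<Rightarrow> 'y::finite \<Rightarrow> real"
    and S :: "(real^'d) set"
  assumes "nonneg_loss L UNIV"
    and "minimizable L UNIV"
    and "finite S"
    and "representative L UNIV S"
  shows "discrete_loss L S \<and> embeds L L S"
  using assms(3) embeds_restrict_representative[OF assms(2,4)]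
  unfolding discrete_loss_def by simp

end
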